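(* Let $f:\mathbb{R}^n\to\mathbb{R}$ be $C^2$ with all eigenvalues of the Hessian $D^2f(x)$ lying in $[\mu,L]$ for every $x$, where $0<\mu\le L$, and let $x^*$ be a minimizer of $f$. Fix a step size $0<\eta\le\frac{2}{L+\mu}$, a window length $m\ge1$, a regularization parameter $\lambda>0$ and an initial point $x_0$, and let $(x_k)$ be generated by Anderson-accelerated gradient descent with relaxation parameter $\beta=1$ (described in the context), with $\nabla f(x_k)\ne0$. Suppose the iterates converge to $x^*$, so that $\|x_k-x^*\|$ is sufficiently small for large $k$. Then there is a sequence $o(k)$ with $o(k)\to0$ as $k\to\infty$ such that for all sufficiently large $k$, $$\frac{\|\nabla f(x_{k+1})\|}{\|\nabla f(x_k)\|}\le \delta_k(1-\eta\mu)+o(k),\qquad \delta_k:=\frac{\|\Pi_k\nabla f(x_k)\|}{\|\nabla f(x_k)\|}\le1,$$ where $\Pi_k=I-U_k(U_k^\top U_k+\lambda I)^{-1}U_k^\top$.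
   Context: Norms are Euclidean $\ell^2$ norms (operator norm for matrices). Let $G(x)=x-\eta\nabla f(x)$. Anderson-accelerated gradient descent (AA-GD) with $\beta=1$: set $x_1=G(x_0)$; for $k\ge1$, let $m_k=\min\{m,k\}$, let $U_k=[U_{k,k-m_k},\dots,U_{k,k-1}]\in\mathbb{R}^{n\times m_k}$ with columns $U_{k,j}=\nabla f(x_k)-\nabla f(x_j)$, compute the weights $(\alpha^k_{k-m_k},\dots,\alpha^k_{k-1})^\top=(U_k^\top U_k+\lambda I)^{-1}U_k^\top\nabla f(x_k)$ (the minimizer of $\|\nabla f(x_k)-U_k\alpha\|^2+\lambda\|\alpha\|^2$), set $\alpha^k_k=1-\sum_{j=k-m_k}^{k-1}\alpha^k_j$ (so the weights sum to one), and define $x_{k+1}=\sum_{j=k-m_k}^{k}\alpha^k_j G(x_j)$. *)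

theory Defs
  imports "HOL-Analysis.Analysis"
begin

text \<open>Real eigenvalue of a square matrix (the Hessian is symmetric, so all its eigenvalues are real).\<close>
definition is_eigenvalue :: "real^'n^'n \<Rightarrow> real \<Rightarrow> bool" where
  "is_eigenvalue A c \<longleftrightarrow> (\<exists>v. v \<noteq> 0 \<and> A *v v = c *\<^sub>R v)"

definition aa_window :: "nat \<Rightarrow> nat \<Rightarrow> nat set" where
  "aa_window m k = {k - min m k ..< k}"

definition aa_U :: "(real^'n \<Rightarrow> real^'n) \<Rightarrow> (nat \<Rightarrow> real^'n) \<Rightarrow> nat \<Rightarrow> nat \<Rightarrow> real^'n" where
  "aa_U df x k j = df (x k) - df (x j)"

text \<open>AA-GD with beta = 1. The weights alpha k j (j in the window) are the solution of
  (U_k^T U_k + lambda I) alpha = U_k^T grad f(x_k), written out entrywise; since the matrix is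
  positive definite this is exactly alpha = (U_k^T U_k + lambda I)^{-1} U_k^T grad f(x_k).\<close>
definition aa_gd :: "(real^'n \<Rightarrow> real^'n) \<Rightarrow> real \<Rightarrow> nat \<Rightarrow> real \<Rightarrow> real^'n
    \<Rightarrow> (nat \<Rightarrow> real^'n) \<Rightarrow> (nat \<Rightarrow> nat \<Rightarrow> real) \<Rightarrow> bool" where
  "aa_gd df \<eta> m lam x0 x \<alpha> \<longleftrightarrow>
     (let G = (\<lambda>y. y - \<eta> *\<^sub>R df y) in
      x 0 = x0 \<and> x 1 = G x0 \<and>
      (\<forall>k\<ge>1.
         (\<forall>i\<in>aa_window m k.
            (\<Sum>j\<in>aa_window m k. (aa_U df x k i \<bullet> aa_U df x k j) * \<alpha> k j) + lam * \<alpha> k i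
              = aa_U df x k i \<bullet> df (x k)) \<and>
         x (Suc k) = (\<Sum>j\<in>aa_window m k. \<alpha> k j *\<^sub>R G (x j))
                     + (1 - (\<Sum>j\<in>aa_window m k. \<alpha> k j)) *\<^sub>R G (x k)))"

text \<open>Pi_k grad f(x_k) = grad f(x_k) - U_k (U_k^T U_k + lambda I)^{-1} U_k^T grad f(x_k)
  = grad f(x_k) - U_k alpha^k.\<close>
definition aa_Pi_grad :: "(real^'n \<Rightarrow> real^'n) \<Rightarrow> nat \<Rightarrow> (nat \<Rightarrow> real^'n) \<Rightarrow> (nat \<Rightarrow> nat \<Rightarrow> real) \<Rightarrow> nat \<Rightarrow> real^'n" where
  "aa_Pi_grad df m x \<alpha> k = df (x k) - (\<Sum>j\<in>aa_window m k. \<alpha> k j *\<^sub>R aa_U df x k j)"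

end

theory Submission
  imports Defs
begin

(* Near the minimizer write grad f(y) = A (y - x* ) + e(y) with A the Hessian at x*, which is
   symmetric (Schwarz) with spectrum in [mu, L], and |e(y)| = o(|y - x*|).  Because the AA weights
   sum to one, inserting this model into the update gives
     grad f(x_(k+1)) = (I - eta A) Pi_k grad f(x_k) + e(x_(k+1)) - e(x_k) + sum_j alpha_j (e(x_k) - e(x_j)).
   For eta <= 2/(L+mu) the map I - eta A contracts by 1 - eta mu; the ridge normal equations give
   |Pi_k grad f(x_k)| <= |grad f(x_k)| and |alpha_j| <= |grad f(x_k)| / sqrt lambda; and since
   |A w| >= mu |w|, every |e(x_i)| is o(1) |grad f(x_i)|.  Dividing by |grad f(x_k)| and absorbing
   the o(1) |grad f(x_(k+1))| term into the left-hand side yields the bound. *)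

section \<open>Symmetric positive definite operators\<close>

lemma psd_Cauchy_Schwarz:
  fixes B :: "'a::real_inner \<Rightarrow> 'a"
  assumes "linear B" and psd: "\<And>w. 0 \<le> w \<bullet> B w" and sym: "\<And>u v. u \<bullet> B v = v \<bullet> B u"
  shows "(u \<bullet> B v)\<^sup>2 \<le> (u \<bullet> B u) * (v \<bullet> B v)"
proof -
  define a b c where "a = u \<bullet> B u" and "b = u \<bullet> B v" and "c = v \<bullet> B v"
  have quadratic: "0 \<le> a + 2 * t * b + t\<^sup>2 * c" for t
  proof -
    have "(u + t *\<^sub>R v) \<bullet> B (u + t *\<^sub>R v) = a + 2 * t * b + t\<^sup>2 * c"
      using sym[of v u] \<open>linear B\<close> unfolding a_def b_def c_def
      by (simp add: linear_add linear_scale inner_add_left inner_add_right algebra_simps power2_eq_square)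
    thus ?thesis using psd[of "u + t *\<^sub>R v"] by simp
  qed
  show ?thesis
  proof (cases "c = 0")
    case True
    have "b = 0"
    proof (rule ccontr)
      assume "b \<noteq> 0"
      with True quadratic[of "- (a + 1) / (2 * b)"] show False by (simp add: field_simps)
    qed
    with True show ?thesis unfolding a_def b_def c_def by simp
  next
    case False
    with psd[of v] have "c > 0" unfolding c_def by simp
    with quadratic[of "- b / c"] have "b\<^sup>2 \<le> a * c" by (simp add: field_simps power2_eq_square)
    thus ?thesis unfolding a_def b_def c_def .
  qed
qed

lemma psd_kernel:
  fixes B :: "'a::real_inner \<Rightarrow> 'a"
  assumes "linear B" and "\<And>w. 0 \<le> w \<bullet> B w" and "\<And>u v. u \<bullet> B v = v \<bullet> B u" and "v \<bullet> B v = 0"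
  shows "B v = 0"
  using psd_Cauchy_Schwarz[OF assms(1-3), of "B v" v] assms(4) by simp

lemma psd_norm_image_le:
  fixes B :: "'a::real_inner \<Rightarrow> 'a"
  assumes "linear B" and psd: "\<And>w. 0 \<le> w \<bullet> B w" and sym: "\<And>u v. u \<bullet> B v = v \<bullet> B u"
    and upper: "\<And>w. w \<bullet> B w \<le> c * (w \<bullet> w)"
  shows "B v \<bullet> B v \<le> c * (v \<bullet> B v)"
proof (cases "B v \<bullet> B v = 0")
  case True
  have "0 \<le> c * (v \<bullet> B v)"
  proof (cases "v \<bullet> B v = 0")
    case False
    with psd[of v] have "0 < v \<bullet> B v" by simp
    with upper[of v] have "0 < c * (v \<bullet> v)" by linarith
    hence "0 < c" using inner_ge_zero[of v] by (auto simp: zero_less_mult_iff)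
    with psd[of v] show ?thesis by simp
  qed simp
  with True show ?thesis by simp
next
  case False
  hence pos: "0 < B v \<bullet> B v" by (simp add: order_less_le)
  have "(B v \<bullet> B v)\<^sup>2 \<le> (B v \<bullet> B (B v)) * (v \<bullet> B v)"
    using psd_Cauchy_Schwarz[OF assms(1-3), of "B v" v] by simp
  also have "\<dots> \<le> c * (B v \<bullet> B v) * (v \<bullet> B v)"
    using upper[of "B v"] psd[of v] by (rule mult_right_mono)
  finally show ?thesis using pos by (simp add: power2_eq_square mult_ac)
qed

lemma linear_diff_scaleR_id: "linear T \<Longrightarrow> linear (\<lambda>w. T w - c *\<^sub>R w)"
  by (rule linearI) (simp_all add: linear_add linear_scale algebra_simps)

(* The minimiser v of the quadratic form on the unit sphere is an eigenvector: T - c is positive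
   semidefinite and its form vanishes at v. *)
lemma symmetric_min_eigenvalue:
  fixes T :: "'a::euclidean_space \<Rightarrow> 'a"
  assumes "linear T" and sym: "\<And>u v. u \<bullet> T v = v \<bullet> T u"
  obtains c v where "v \<noteq> 0" and "T v = c *\<^sub>R v" and "\<And>w. c * (w \<bullet> w) \<le> w \<bullet> T w"
proof -
  have "\<exists>v\<in>sphere 0 1. \<forall>w\<in>sphere 0 1. v \<bullet> T v \<le> w \<bullet> T w"
    using \<open>linear T\<close> unfolding linear_conv_bounded_linear
    by (intro continuous_attains_inf continuous_on_inner continuous_on_id linear_continuous_on) auto
  then obtain v where v: "norm v = 1" and min: "\<And>w. norm w = 1 \<Longrightarrow> v \<bullet> T v \<le> w \<bullet> T w"
    by auto
  define c where "c = v \<bullet> T v"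
  have lower: "c * (w \<bullet> w) \<le> w \<bullet> T w" for w
  proof (cases "w = 0")
    case False
    have "c \<le> (w /\<^sub>R norm w) \<bullet> T (w /\<^sub>R norm w)"
      using min[of "w /\<^sub>R norm w"] False by (simp add: c_def)
    also have "\<dots> = (w \<bullet> T w) / (w \<bullet> w)"
      using \<open>linear T\<close> by (simp add: linear_scale dot_square_norm divide_inverse inverse_mult_distrib power2_eq_square)
    finally show ?thesis using False by (simp add: field_simps)
  qed simp
  define B where "B = (\<lambda>w. T w - c *\<^sub>R w)"
  have "linear B" unfolding B_def using \<open>linear T\<close> by (rule linear_diff_scaleR_id)
  moreover have "0 \<le> w \<bullet> B w" for w using lower[of w] by (simp add: B_def inner_diff_right)
  moreover have "u \<bullet> B w = w \<bullet> B u" for u w using sym[of u w] by (simp add: B_def inner_diff_right inner_commute)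
  moreover have "v \<bullet> B v = 0" using v by (simp add: B_def inner_diff_right c_def dot_square_norm)
  ultimately have "B v = 0" by (rule psd_kernel)
  hence "T v = c *\<^sub>R v" by (simp add: B_def)
  moreover have "v \<noteq> 0" using v by auto
  ultimately show ?thesis using lower that by blast
qed

lemma eigenvalue_bounds_quadratic_form:
  fixes A :: "real^'n^'n"
  assumes sym: "\<And>u v. u \<bullet> (A *v v) = v \<bullet> (A *v u)"
    and eig: "\<And>c. is_eigenvalue A c \<Longrightarrow> \<mu> \<le> c \<and> c \<le> L"
  shows "\<mu> * (v \<bullet> v) \<le> v \<bullet> (A *v v)" and "v \<bullet> (A *v v) \<le> L * (v \<bullet> v)"
proof -
  obtain c u where "u \<noteq> 0" "A *v u = c *\<^sub>R u" and c: "\<And>w. c * (w \<bullet> w) \<le> w \<bullet> (A *v w)"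
    by (rule symmetric_min_eigenvalue[of "(*v) A"]) (auto simp: sym)
  hence "is_eigenvalue A c" unfolding is_eigenvalue_def by blast
  with eig have "\<mu> * (v \<bullet> v) \<le> c * (v \<bullet> v)" by (simp add: mult_right_mono)
  with c[of v] show "\<mu> * (v \<bullet> v) \<le> v \<bullet> (A *v v)" by linarith
  have neg: "(-A) *v w = - (A *v w)" for w by (simp add: matrix_vector_mult_def vec_eq_iff sum_negf)
  obtain d u where "u \<noteq> 0" "(-A) *v u = d *\<^sub>R u" and d: "\<And>w. d * (w \<bullet> w) \<le> w \<bullet> ((-A) *v w)"
    by (rule symmetric_min_eigenvalue[of "(*v) (-A)"]) (auto simp: neg sym)
  hence "is_eigenvalue A (- d)" unfolding is_eigenvalue_def neg by (metis minus_equation_iff scaleR_minus_left)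
  with eig have "- d \<le> L" by blast
  hence "- d * (v \<bullet> v) \<le> L * (v \<bullet> v)" by (rule mult_right_mono) simp
  with d[of v] show "v \<bullet> (A *v v) \<le> L * (v \<bullet> v)" by (simp add: neg)
qed

lemma step_size_bounds:
  fixes \<mu> L \<eta> :: real
  assumes "0 < \<mu>" and "\<mu> \<le> L" and "0 < \<eta>" and "\<eta> \<le> 2 / (L + \<mu>)"
  shows "\<eta> * (L + \<mu>) \<le> 2" and "\<eta> * \<mu> \<le> 1"
proof -
  show "\<eta> * (L + \<mu>) \<le> 2" using assms by (simp add: field_simps)
  moreover have "\<eta> * \<mu> \<le> \<eta> * L" using assms by simp
  ultimately show "\<eta> * \<mu> \<le> 1" by (simp add: distrib_left)
qed

lemma gradient_step_contraction:
  fixes T :: "'a::real_inner \<Rightarrow> 'a"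
  assumes "linear T" and sym: "\<And>u v. u \<bullet> T v = v \<bullet> T u"
    and lower: "\<And>w. \<mu> * (w \<bullet> w) \<le> w \<bullet> T w" and upper: "\<And>w. w \<bullet> T w \<le> L * (w \<bullet> w)"
    and "0 < \<mu>" and "\<mu> \<le> L" and "0 < \<eta>" and "\<eta> \<le> 2 / (L + \<mu>)"
  shows "norm (v - \<eta> *\<^sub>R T v) \<le> (1 - \<eta> * \<mu>) * norm v"
proof -
  define B where "B = (\<lambda>w. T w - \<mu> *\<^sub>R w)"
  have "linear B" unfolding B_def using \<open>linear T\<close> by (rule linear_diff_scaleR_id)
  have psd: "0 \<le> w \<bullet> B w" for w using lower[of w] by (simp add: B_def inner_diff_right)
  have symB: "u \<bullet> B w = w \<bullet> B u" for u w using sym[of u w] by (simp add: B_def inner_diff_right inner_commute)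
  have "w \<bullet> B w \<le> (L - \<mu>) * (w \<bullet> w)" for w using upper[of w] by (simp add: B_def inner_diff_right algebra_simps)
  \<comment> \<open>This is what makes the cross term absorb the quadratic one exactly when \<open>\<eta> \<le> 2 / (L + \<mu>)\<close>.\<close>
  hence BB: "B v \<bullet> B v \<le> (L - \<mu>) * (v \<bullet> B v)" by (rule psd_norm_image_le[OF \<open>linear B\<close> psd symB])
  note step_size = step_size_bounds[OF assms(5-8)]
  have "v - \<eta> *\<^sub>R T v = (1 - \<eta> * \<mu>) *\<^sub>R v - \<eta> *\<^sub>R B v"
    by (simp add: B_def algebra_simps)
  hence "(norm (v - \<eta> *\<^sub>R T v))\<^sup>2 = (norm ((1 - \<eta> * \<mu>) *\<^sub>R v - \<eta> *\<^sub>R B v))\<^sup>2"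
    by simp
  also have "\<dots> = (1 - \<eta> * \<mu>)\<^sup>2 * (v \<bullet> v) - 2 * \<eta> * (1 - \<eta> * \<mu>) * (v \<bullet> B v) + \<eta>\<^sup>2 * (B v \<bullet> B v)"
    unfolding power2_norm_eq_inner
    by (simp add: inner_diff_left inner_diff_right inner_commute[of "B v" v] algebra_simps power2_eq_square)
  also have "\<dots> \<le> (1 - \<eta> * \<mu>)\<^sup>2 * (v \<bullet> v) - \<eta> * (2 - \<eta> * (L + \<mu>)) * (v \<bullet> B v)"
    using mult_left_mono[OF BB, of "\<eta>\<^sup>2"] by (simp add: algebra_simps power2_eq_square)
  also have "\<dots> \<le> ((1 - \<eta> * \<mu>) * norm v)\<^sup>2"
    using step_size(1) psd[of v] \<open>0 < \<eta>\<close> by (simp add: power_mult_distrib dot_square_norm)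
  finally have sq: "(norm (v - \<eta> *\<^sub>R T v))\<^sup>2 \<le> ((1 - \<eta> * \<mu>) * norm v)\<^sup>2" .
  show ?thesis using step_size(2) by (intro power2_le_imp_le[OF sq]) simp
qed

lemma norm_image_ge_of_coercive:
  fixes T :: "'a::real_inner \<Rightarrow> 'a"
  assumes lower: "\<And>w. \<mu> * (w \<bullet> w) \<le> w \<bullet> T w"
  shows "\<mu> * norm w \<le> norm (T w)"
proof (cases "w = 0")
  case False
  have "norm w * (\<mu> * norm w) \<le> w \<bullet> T w" using lower[of w] by (simp add: dot_square_norm power2_eq_square mult_ac)
  also have "\<dots> \<le> norm w * norm (T w)" by (rule Cauchy_Schwarz_ineq2[THEN order_trans[OF abs_ge_self]])
  finally show ?thesis using False by simp
qed (use lower[of 0] in simp)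

section \<open>Symmetry of the Hessian\<close>

lemma onorm_matrix_le_norm: "onorm ((*v) (M::real^'n^'m)) \<le> real CARD('m) * real CARD('n) * norm M"
proof (rule onorm_le_matrix_component)
  fix i j
  have "\<bar>M $ i $ j\<bar> \<le> norm (M $ i)" by (rule component_le_norm_cart)
  also have "\<dots> \<le> norm M" by (rule Finite_Cartesian_Product.norm_nth_le)
  finally show "\<bar>M $ i $ j\<bar> \<le> norm M" .
qed

lemma second_difference_mean_value:
  fixes f :: "'a::real_inner \<Rightarrow> real"
  assumes grad: "\<And>y. (f has_derivative (\<lambda>h. df y \<bullet> h)) (at y)" and "0 < s"
  obtains a where "0 < a" and "a < s"
    and "f (y + s *\<^sub>R u + s *\<^sub>R v) - f (y + s *\<^sub>R u) - f (y + s *\<^sub>R v) + f y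
           = s * ((df (y + a *\<^sub>R u + s *\<^sub>R v) - df (y + a *\<^sub>R u)) \<bullet> u)"
proof -
  define \<phi> where "\<phi> a = f (y + a *\<^sub>R u + s *\<^sub>R v) - f (y + a *\<^sub>R u)" for a
  have "(\<phi> has_derivative (\<lambda>t. t * ((df (y + a *\<^sub>R u + s *\<^sub>R v) - df (y + a *\<^sub>R u)) \<bullet> u)))
      (at a within {0..s})" for a
    unfolding \<phi>_def
    by (rule derivative_eq_intros has_derivative_compose[OF _ grad] | simp add: inner_diff_left algebra_simps)+
  from mvt_simple[OF \<open>0 < s\<close> this] obtain a where "a \<in> {0<..<s}"
    and "\<phi> s - \<phi> 0 = (s - 0) * ((df (y + a *\<^sub>R u + s *\<^sub>R v) - df (y + a *\<^sub>R u)) \<bullet> u)"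
    by blast
  thus ?thesis by (intro that[of a]) (auto simp: \<phi>_def algebra_simps)
qed

lemma second_difference_estimate:
  fixes f :: "'a::real_inner \<Rightarrow> real"
  assumes grad: "\<And>y. (f has_derivative (\<lambda>h. df y \<bullet> h)) (at y)"
    and hess: "\<And>y. (df has_derivative D y) (at y)"
    and close: "\<forall>z\<in>ball y d. onorm (D z - D y) \<le> \<epsilon>"
    and "0 < s" and small: "s * (norm u + norm v) < d"
  shows "\<bar>f (y + s *\<^sub>R u + s *\<^sub>R v) - f (y + s *\<^sub>R u) - f (y + s *\<^sub>R v) + f y - s\<^sup>2 * (u \<bullet> D y v)\<bar>
          \<le> s\<^sup>2 * \<epsilon> * norm u * norm v"
proof -
  obtain a where a: "0 < a" "a < s" and mv: "f (y + s *\<^sub>R u + s *\<^sub>R v) - f (y + s *\<^sub>R u) - f (y + s *\<^sub>R v) + f y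
      = s * ((df (y + a *\<^sub>R u + s *\<^sub>R v) - df (y + a *\<^sub>R u)) \<bullet> u)"
    using second_difference_mean_value[OF grad \<open>0 < s\<close>] .
  define p where "p = y + a *\<^sub>R u"
  have segment: "p + t *\<^sub>R (p + s *\<^sub>R v - p) \<in> ball y d" if "t \<in> {0..1}" for t
  proof -
    have "norm (a *\<^sub>R u + (t * s) *\<^sub>R v) \<le> s * norm u + s * norm v"
      using a that \<open>0 < s\<close>
      by (intro order_trans[OF norm_triangle_ineq] add_mono) (auto intro: mult_right_mono mult_left_le_one_le)
    moreover have "y - (p + t *\<^sub>R (p + s *\<^sub>R v - p)) = - (a *\<^sub>R u + (t * s) *\<^sub>R v)"
      by (simp add: p_def algebra_simps)
    ultimately show ?thesis using small by (simp only: mem_ball dist_norm norm_minus_cancel) argo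
  qed
  have "norm (df (p + s *\<^sub>R v) - df p - D y (p + s *\<^sub>R v - p)) \<le> norm (p + s *\<^sub>R v - p) * \<epsilon>"
    using small \<open>0 < s\<close>
    by (intro differentiable_bound_linearization[OF segment has_derivative_at_withinI[OF hess]] close[rule_format])
      (simp_all, smt (verit) mult_nonneg_nonneg norm_ge_zero)
  moreover have "D y (s *\<^sub>R v) = s *\<^sub>R D y v"
    using hess[of y] by (simp add: has_derivative_bounded_linear bounded_linear.linear linear_scale)
  ultimately have lin: "norm (df (p + s *\<^sub>R v) - df p - s *\<^sub>R D y v) \<le> s * norm v * \<epsilon>"
    using \<open>0 < s\<close> by simp
  have "\<bar>(df (p + s *\<^sub>R v) - df p) \<bullet> u - s * (u \<bullet> D y v)\<bar> = \<bar>(df (p + s *\<^sub>R v) - df p - s *\<^sub>R D y v) \<bullet> u\<bar>"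
    by (simp add: inner_diff_left inner_diff_right inner_commute[of _ u])
  also have "\<dots> \<le> s * norm v * \<epsilon> * norm u"
    using lin by (intro order_trans[OF Cauchy_Schwarz_ineq2] mult_right_mono) simp_all
  finally have "s * \<bar>(df (p + s *\<^sub>R v) - df p) \<bullet> u - s * (u \<bullet> D y v)\<bar> \<le> s * (s * norm v * \<epsilon> * norm u)"
    using \<open>0 < s\<close> by simp
  moreover have "\<bar>s * ((df (p + s *\<^sub>R v) - df p) \<bullet> u) - s\<^sup>2 * (u \<bullet> D y v)\<bar>
      = \<bar>s * ((df (p + s *\<^sub>R v) - df p) \<bullet> u - s * (u \<bullet> D y v))\<bar>"
    by (simp add: power2_eq_square right_diff_distrib mult.assoc)
  ultimately have "\<bar>s * ((df (p + s *\<^sub>R v) - df p) \<bullet> u) - s\<^sup>2 * (u \<bullet> D y v)\<bar> \<le> s * (s * norm v * \<epsilon> * norm u)"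
    using \<open>0 < s\<close> by (simp add: abs_mult)
  thus ?thesis unfolding mv p_def by (simp add: power2_eq_square mult_ac)
qed

lemma hessian_symmetric:
  fixes f :: "'a::real_inner \<Rightarrow> real"
  assumes grad: "\<And>y. (f has_derivative (\<lambda>h. df y \<bullet> h)) (at y)"
    and hess: "\<And>y. (df has_derivative D y) (at y)"
    and cont: "\<And>\<epsilon>. 0 < \<epsilon> \<Longrightarrow> \<exists>d>0. \<forall>z\<in>ball y d. onorm (D z - D y) \<le> \<epsilon>"
  shows "u \<bullet> D y v = v \<bullet> D y u"
proof -
  \<comment> \<open>The second difference is symmetric in \<open>u\<close>, \<open>v\<close> and approximates both \<open>s\<^sup>2 u \<bullet> D y v\<close> and \<open>s\<^sup>2 v \<bullet> D y u\<close>.\<close>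
  have bound: "\<bar>u \<bullet> D y v - v \<bullet> D y u\<bar> \<le> 2 * \<epsilon> * norm u * norm v" if "0 < \<epsilon>" for \<epsilon>
  proof -
    obtain d where "0 < d" and close: "\<forall>z\<in>ball y d. onorm (D z - D y) \<le> \<epsilon>"
      using cont[OF \<open>0 < \<epsilon>\<close>] by blast
    define s where "s = d / (2 * (norm u + norm v + 1))"
    have "0 < norm u + norm v + 1" by (simp add: add_nonneg_pos)
    hence "0 < s" and half: "s * (norm u + norm v + 1) = d / 2"
      using \<open>0 < d\<close> by (simp_all add: s_def field_simps)
    have "s * (norm u + norm v) < s * (norm u + norm v + 1)" using \<open>0 < s\<close> by simp
    also have "\<dots> < d" using \<open>0 < d\<close> by (simp add: half)
    finally have small: "s * (norm u + norm v) < d" .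
    note uv = second_difference_estimate[OF grad hess close \<open>0 < s\<close> small]
    have "s * (norm v + norm u) < d" using small by (simp add: add.commute)
    note vu = second_difference_estimate[OF grad hess close \<open>0 < s\<close> this]
    have "f (y + s *\<^sub>R u + s *\<^sub>R v) = f (y + s *\<^sub>R v + s *\<^sub>R u)" by (simp add: add_ac)
    with uv vu have "\<bar>s\<^sup>2 * (u \<bullet> D y v - v \<bullet> D y u)\<bar> \<le> 2 * (s\<^sup>2 * \<epsilon> * norm u * norm v)"
      by (simp only: abs_le_iff mult_ac right_diff_distrib) linarith
    hence "s\<^sup>2 * \<bar>u \<bullet> D y v - v \<bullet> D y u\<bar> \<le> s\<^sup>2 * (2 * \<epsilon> * norm u * norm v)"
      by (simp add: abs_mult mult_ac)
    thus ?thesis using \<open>0 < s\<close> by simp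
  qed
  have "\<bar>u \<bullet> D y v - v \<bullet> D y u\<bar> \<le> 0"
  proof (rule field_le_epsilon)
    fix e :: real assume "0 < e"
    define K where "K = norm u * norm v + 1"
    have "0 < K" by (simp add: K_def add_nonneg_pos)
    define \<epsilon> where "\<epsilon> = e / (2 * K)"
    have "0 < \<epsilon>" using \<open>0 < e\<close> \<open>0 < K\<close> by (simp add: \<epsilon>_def)
    have "2 * \<epsilon> * norm u * norm v \<le> 2 * \<epsilon> * K"
      using \<open>0 < \<epsilon>\<close> by (simp add: K_def)
    also have "\<dots> = e" using \<open>0 < K\<close> by (simp add: \<epsilon>_def)
    finally show "\<bar>u \<bullet> D y v - v \<bullet> D y u\<bar> \<le> 0 + e" using bound[OF \<open>0 < \<epsilon>\<close>] by simp
  qed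
  thus ?thesis by simp
qed

lemma hessian_matrix_symmetric:
  fixes f :: "real^'n \<Rightarrow> real" and H :: "real^'n \<Rightarrow> real^'n^'n"
  assumes grad: "\<And>y. (f has_derivative (\<lambda>h. df y \<bullet> h)) (at y)"
    and hess: "\<And>y. (df has_derivative (\<lambda>h. H y *v h)) (at y)"
    and "continuous_on UNIV H"
  shows "u \<bullet> (H y *v v) = v \<bullet> (H y *v u)"
proof (rule hessian_symmetric[OF grad hess])
  fix \<epsilon> :: real assume "0 < \<epsilon>"
  define C where "C = real CARD('n) * real CARD('n)"
  have "0 < C" by (simp add: C_def)
  then obtain d where "0 < d" and d: "\<And>z. dist z y < d \<Longrightarrow> dist (H z) (H y) < \<epsilon> / C"
    using \<open>continuous_on UNIV H\<close> \<open>0 < \<epsilon>\<close> unfolding continuous_on_iff by (metis UNIV_I divide_pos_pos)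
  have "onorm ((\<lambda>h. H z *v h) - (\<lambda>h. H y *v h)) \<le> \<epsilon>" if "z \<in> ball y d" for z
  proof -
    have "onorm ((\<lambda>h. H z *v h) - (\<lambda>h. H y *v h)) = onorm (\<lambda>h. (H z - H y) *v h)"
      by (simp add: fun_diff_def matrix_vector_mult_diff_rdistrib)
    also have "\<dots> \<le> C * norm (H z - H y)" unfolding C_def by (rule onorm_matrix_le_norm)
    also have "\<dots> \<le> \<epsilon>"
      using d[of z] that \<open>0 < C\<close> by (simp add: dist_commute dist_norm norm_minus_commute field_simps)
    finally show ?thesis .
  qed
  with \<open>0 < d\<close> show "\<exists>d>0. \<forall>z\<in>ball y d. onorm ((\<lambda>h. H z *v h) - (\<lambda>h. H y *v h)) \<le> \<epsilon>" by blast
qed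

lemma gradient_zero_at_minimizer:
  fixes f :: "'a::real_inner \<Rightarrow> real"
  assumes "(f has_derivative (\<lambda>h. g \<bullet> h)) (at x)" and "\<And>y. f x \<le> f y"
  shows "g = 0"
proof -
  have "(\<lambda>h. g \<bullet> h) = (\<lambda>h. 0)"
    using assms by (intro has_derivative_local_min) (auto intro: always_eventually)
  hence "g \<bullet> g = 0" by metis
  thus ?thesis by simp
qed

section \<open>One step of Anderson acceleration\<close>

lemma ridge_residual_bounds:
  fixes U :: "'i \<Rightarrow> 'a::real_inner"
  assumes "finite W" and "0 < lam"
    and normal_eq: "\<And>i. i \<in> W \<Longrightarrow> (\<Sum>j\<in>W. (U i \<bullet> U j) * a j) + lam * a i = U i \<bullet> g"
  shows "norm (g - (\<Sum>j\<in>W. a j *\<^sub>R U j)) \<le> norm g"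
    and "\<And>i. i \<in> W \<Longrightarrow> \<bar>a i\<bar> * sqrt lam \<le> norm g"
proof -
  define V where "V = (\<Sum>j\<in>W. a j *\<^sub>R U j)"
  define Q where "Q = (\<Sum>i\<in>W. (a i)\<^sup>2)"
  have "V \<bullet> V = (\<Sum>i\<in>W. a i * (U i \<bullet> V))"
    unfolding V_def by (simp add: inner_sum_left)
  also have "\<dots> = (\<Sum>i\<in>W. a i * (\<Sum>j\<in>W. (U i \<bullet> U j) * a j))"
    unfolding V_def by (simp add: inner_sum_right mult_ac)
  also have "\<dots> = (\<Sum>i\<in>W. a i * (U i \<bullet> g - lam * a i))"
    by (rule sum.cong) (auto simp: normal_eq[symmetric])
  also have "\<dots> = V \<bullet> g - lam * Q"
    unfolding V_def Q_def
    by (simp add: inner_sum_left right_diff_distrib sum_subtractf sum_distrib_left power2_eq_square mult_ac)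
  finally have key: "V \<bullet> V + lam * Q = V \<bullet> g" by simp
  have "0 \<le> lam * Q" using \<open>0 < lam\<close> by (simp add: Q_def sum_nonneg)
  have "(norm (g - V))\<^sup>2 = g \<bullet> g - 2 * (V \<bullet> g) + V \<bullet> V"
    by (simp add: power2_norm_eq_inner inner_diff_left inner_diff_right inner_commute)
  also have "\<dots> \<le> g \<bullet> g"
    using key \<open>0 \<le> lam * Q\<close> inner_ge_zero[of V] by linarith
  also have "\<dots> = (norm g)\<^sup>2" by (simp add: power2_norm_eq_inner)
  finally show "norm (g - (\<Sum>j\<in>W. a j *\<^sub>R U j)) \<le> norm g"
    unfolding V_def[symmetric] by (rule power2_le_imp_le) simp
  fix i assume "i \<in> W"
  have "V \<bullet> g \<le> norm V * norm g" by (rule order_trans[OF abs_ge_self Cauchy_Schwarz_ineq2])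
  moreover have "2 * (norm V * norm g) \<le> (norm V)\<^sup>2 + (norm g)\<^sup>2"
    using sum_squares_bound[of "norm V" "norm g"] by (simp add: power2_eq_square mult_ac)
  ultimately have "lam * Q \<le> (norm g)\<^sup>2"
    using key by (simp add: power2_norm_eq_inner) (smt (verit) zero_le_power2 power2_norm_eq_inner)
  moreover have "lam * (a i)\<^sup>2 \<le> lam * Q"
    unfolding Q_def using \<open>i \<in> W\<close> \<open>finite W\<close> \<open>0 < lam\<close> by (intro mult_left_mono member_le_sum) auto
  ultimately have "lam * (a i)\<^sup>2 \<le> (norm g)\<^sup>2" by linarith
  hence "(\<bar>a i\<bar> * sqrt lam)\<^sup>2 \<le> (norm g)\<^sup>2"
    using \<open>0 < lam\<close> by (simp add: power_mult_distrib mult_ac)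
  thus "\<bar>a i\<bar> * sqrt lam \<le> norm g" by (rule power2_le_imp_le) simp
qed

lemma anderson_step_gradient_decomposition:
  fixes T :: "'a::real_vector \<Rightarrow> 'a"
  assumes "linear T"
    and step: "x (Suc k) = (\<Sum>j\<in>W. a j *\<^sub>R (x j - \<eta> *\<^sub>R df (x j))) + (1 - (\<Sum>j\<in>W. a j)) *\<^sub>R (x k - \<eta> *\<^sub>R df (x k))"
    and e: "e = (\<lambda>y. df y - T (y - xs))"
    and P: "P = df (x k) - (\<Sum>j\<in>W. a j *\<^sub>R (df (x k) - df (x j)))"
  shows "df (x (Suc k)) = (P - \<eta> *\<^sub>R T P) + e (x (Suc k)) - e (x k) + (\<Sum>j\<in>W. a j *\<^sub>R (e (x k) - e (x j)))"
proof -
  have model: "T (y - xs) = df y - e y" for y by (simp add: e)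
  have "(1 - (\<Sum>j\<in>W. a j)) *\<^sub>R (x k - \<eta> *\<^sub>R df (x k))
      = (x k - \<eta> *\<^sub>R df (x k)) - (\<Sum>j\<in>W. a j *\<^sub>R (x k - \<eta> *\<^sub>R df (x k)))"
    by (simp add: scaleR_diff_left scaleR_sum_left)
  hence "x (Suc k) = (x k - \<eta> *\<^sub>R df (x k))
      + (\<Sum>j\<in>W. a j *\<^sub>R ((x j - \<eta> *\<^sub>R df (x j)) - (x k - \<eta> *\<^sub>R df (x k))))"
    unfolding step by (simp add: scaleR_diff_right sum_subtractf)
  hence "x (Suc k) - xs = (x k - xs) - \<eta> *\<^sub>R df (x k)
      + (\<Sum>j\<in>W. a j *\<^sub>R (((x j - xs) - (x k - xs)) + \<eta> *\<^sub>R (df (x k) - df (x j))))"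
    by (simp add: algebra_simps)
  hence "T (x (Suc k) - xs) = T (x k - xs) - \<eta> *\<^sub>R T (df (x k))
      + (\<Sum>j\<in>W. a j *\<^sub>R ((T (x j - xs) - T (x k - xs)) + \<eta> *\<^sub>R T (df (x k) - df (x j))))"
    by (simp only: linear_add[OF \<open>linear T\<close>] linear_diff[OF \<open>linear T\<close>] linear_scale[OF \<open>linear T\<close>]
        linear_sum[OF \<open>linear T\<close>] o_def)
  also have "\<dots> = (df (x k) - e (x k)) - \<eta> *\<^sub>R T (df (x k))
      + (\<Sum>j\<in>W. a j *\<^sub>R ((e (x k) - e (x j)) - (df (x k) - df (x j)) + \<eta> *\<^sub>R T (df (x k) - df (x j))))"
    unfolding model by (simp add: algebra_simps)
  also have "\<dots> = (P - \<eta> *\<^sub>R T P) - e (x k) + (\<Sum>j\<in>W. a j *\<^sub>R (e (x k) - e (x j)))"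
    unfolding P linear_diff[OF \<open>linear T\<close>] linear_sum[OF \<open>linear T\<close>] linear_scale[OF \<open>linear T\<close>] o_def
    by (simp add: scaleR_diff_right scaleR_sum_right sum_subtractf sum.distrib algebra_simps)
  finally show ?thesis using model[of "x (Suc k)"] by (simp add: algebra_simps)
qed

lemma aa_gd_step:
  assumes "aa_gd df \<eta> m lam x0 x \<alpha>" and "1 \<le> k"
  shows "\<And>i. i \<in> aa_window m k \<Longrightarrow>
           (\<Sum>j\<in>aa_window m k. (aa_U df x k i \<bullet> aa_U df x k j) * \<alpha> k j) + lam * \<alpha> k i
             = aa_U df x k i \<bullet> df (x k)"
    and "x (Suc k) = (\<Sum>j\<in>aa_window m k. \<alpha> k j *\<^sub>R (x j - \<eta> *\<^sub>R df (x j)))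
           + (1 - (\<Sum>j\<in>aa_window m k. \<alpha> k j)) *\<^sub>R (x k - \<eta> *\<^sub>R df (x k))"
  using assms unfolding aa_gd_def Let_def by auto

lemma aa_gd_gradient_estimate:
  fixes A :: "real^'n^'n"
  assumes aa: "aa_gd df \<eta> m lam x0 x \<alpha>" and "1 \<le> k" and "0 < lam"
    and e: "e = (\<lambda>y. df y - A *v (y - xs))"
    and contr: "\<And>v. norm (v - \<eta> *\<^sub>R (A *v v)) \<le> c * norm v"
  shows "norm (aa_Pi_grad df m x \<alpha> k) \<le> norm (df (x k))"
    and "norm (df (x (Suc k))) \<le> c * norm (aa_Pi_grad df m x \<alpha> k) + norm (e (x (Suc k))) + norm (e (x k))
           + norm (df (x k)) / sqrt lam * (\<Sum>j\<in>aa_window m k. norm (e (x k)) + norm (e (x j)))"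
proof -
  define W where "W = aa_window m k"
  define P where "P = aa_Pi_grad df m x \<alpha> k"
  have "finite W" by (simp add: W_def aa_window_def)
  have P_eq: "P = df (x k) - (\<Sum>j\<in>W. \<alpha> k j *\<^sub>R (df (x k) - df (x j)))"
    by (simp add: P_def W_def aa_Pi_grad_def aa_U_def)
  note ridge = ridge_residual_bounds[OF \<open>finite W\<close> \<open>0 < lam\<close>, of "aa_U df x k" "\<alpha> k" "df (x k)"]
  show "norm P \<le> norm (df (x k))"
    using ridge(1) aa_gd_step(1)[OF aa \<open>1 \<le> k\<close>] by (simp add: P_def aa_Pi_grad_def W_def)
  have coeff: "\<bar>\<alpha> k j\<bar> \<le> norm (df (x k)) / sqrt lam" if "j \<in> W" for j
    using ridge(2)[OF _ that] aa_gd_step(1)[OF aa \<open>1 \<le> k\<close>] \<open>0 < lam\<close>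
    by (simp add: W_def field_simps)
  have "norm (\<Sum>j\<in>W. \<alpha> k j *\<^sub>R (e (x k) - e (x j)))
      \<le> (\<Sum>j\<in>W. norm (df (x k)) / sqrt lam * (norm (e (x k)) + norm (e (x j))))"
  proof (rule order_trans[OF norm_sum sum_mono])
    fix j assume "j \<in> W"
    have "\<bar>\<alpha> k j\<bar> * norm (e (x k) - e (x j)) \<le> norm (df (x k)) / sqrt lam * (norm (e (x k)) + norm (e (x j)))"
      using coeff[OF \<open>j \<in> W\<close>] by (intro mult_mono norm_triangle_ineq4) auto
    thus "norm (\<alpha> k j *\<^sub>R (e (x k) - e (x j))) \<le> norm (df (x k)) / sqrt lam * (norm (e (x k)) + norm (e (x j)))"
      by simp
  qed
  moreover have "df (x (Suc k)) = (P - \<eta> *\<^sub>R (A *v P)) + e (x (Suc k)) - e (x k)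
      + (\<Sum>j\<in>W. \<alpha> k j *\<^sub>R (e (x k) - e (x j)))"
    using anderson_step_gradient_decomposition[OF matrix_vector_mul_linear aa_gd_step(2)[OF aa \<open>1 \<le> k\<close>] e]
    by (simp add: P_eq W_def)
  moreover note contr[of P]
  ultimately show "norm (df (x (Suc k))) \<le> c * norm P + norm (e (x (Suc k))) + norm (e (x k))
      + norm (df (x k)) / sqrt lam * (\<Sum>j\<in>aa_window m k. norm (e (x k)) + norm (e (x j)))"
    unfolding W_def[symmetric] sum_distrib_left[symmetric]
    by (smt (verit) norm_triangle_ineq norm_triangle_ineq4)
qed

section \<open>The asymptotic rate\<close>

lemma linearization_error_le_value:
  fixes T :: "'a::real_normed_vector \<Rightarrow> 'b::real_normed_vector"
  assumes coercive: "\<And>w. \<mu> * norm w \<le> norm (T w)" and "0 < \<mu>"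
    and err: "norm (F y - T (y - a)) \<le> \<rho> * norm (y - a)" and "0 \<le> \<rho>" and "\<rho> \<le> \<mu> / 2"
  shows "norm (F y - T (y - a)) \<le> 2 * \<rho> / \<mu> * norm (F y)"
proof -
  have "\<mu> * norm (y - a) \<le> norm (F y) + norm (F y - T (y - a))"
    using coercive[of "y - a"] norm_triangle_ineq4[of "F y" "F y - T (y - a)"] by simp
  also have "\<dots> \<le> norm (F y) + \<mu> / 2 * norm (y - a)"
    using err mult_right_mono[OF \<open>\<rho> \<le> \<mu> / 2\<close> norm_ge_zero[of "y - a"]] by simp
  finally have "norm (y - a) \<le> 2 / \<mu> * norm (F y)"
    using \<open>0 < \<mu>\<close> by (simp add: field_simps)
  hence "\<rho> * norm (y - a) \<le> \<rho> * (2 / \<mu> * norm (F y))" using \<open>0 \<le> \<rho>\<close> by (rule mult_left_mono)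
  with err show ?thesis by (simp add: mult_ac)
qed

lemma ratio_bound_absorb:
  fixes n n' p c t R :: real
  assumes bound: "n' \<le> c * p + t * n' + R * n"
    and "0 \<le> c" "c \<le> 1" "0 \<le> p" "p \<le> n" "0 \<le> t" "t \<le> 1 / 2" "0 \<le> R" "0 < n" "0 \<le> n'"
  shows "n' / n \<le> p / n * c + (R + 2 * t * (1 + R))"
proof -
  have "c * p \<le> p" using mult_left_le_one_le[OF \<open>0 \<le> p\<close> \<open>0 \<le> c\<close> \<open>c \<le> 1\<close>] by (simp add: mult.commute)
  moreover have "t * n' \<le> 1 / 2 * n'" using \<open>t \<le> 1 / 2\<close> \<open>0 \<le> n'\<close> by (rule mult_right_mono)
  ultimately have "n' \<le> 2 * n + 2 * (R * n)" using bound \<open>p \<le> n\<close> by linarith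
  hence "t * n' \<le> t * (2 * n + 2 * (R * n))" using \<open>0 \<le> t\<close> by (rule mult_left_mono)
  with bound have "n' \<le> c * p + (R + 2 * t * (1 + R)) * n" by (simp add: algebra_simps)
  thus ?thesis using \<open>0 < n\<close> by (simp add: field_simps)
qed

lemma linearization_ratio_tendsto_zero:
  assumes "(F has_derivative T) (at a)" and "X \<longlonglongrightarrow> a" and "\<And>k. X k \<noteq> a"
  shows "(\<lambda>k. norm (F (X k) - F a - T (X k - a)) / norm (X k - a)) \<longlonglongrightarrow> 0"
proof -
  have "((\<lambda>y. norm (F y - F a - T (y - a)) / norm (y - a)) \<longlongrightarrow> 0) (at a)"
    using assms(1) unfolding has_derivative_iff_norm by blast
  moreover have "filterlim X (at a) sequentially"
    using assms(2,3) by (intro filterlim_atI) simp_all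
  ultimately show ?thesis by (rule filterlim_compose)
qed

lemma aa_window_sum_tendsto_zero:
  fixes E :: "nat \<Rightarrow> real"
  assumes "E \<longlonglongrightarrow> 0"
  shows "(\<lambda>k. \<Sum>j\<in>aa_window m k. E k + E j) \<longlonglongrightarrow> 0"
proof -
  have "(\<lambda>k. \<Sum>i<m. E k + E (k - m + i)) \<longlonglongrightarrow> 0"
  proof (intro tendsto_null_sum tendsto_add_zero assms)
    fix i
    have "(\<lambda>k. E (k + i)) \<longlonglongrightarrow> 0" using assms by (rule LIMSEQ_ignore_initial_segment)
    from filterlim_compose[OF this filterlim_minus_const_nat_at_top]
    show "(\<lambda>k. E (k - m + i)) \<longlonglongrightarrow> 0" by simp
  qed
  moreover have "\<forall>\<^sub>F k in sequentially. (\<Sum>i<m. E k + E (k - m + i)) = (\<Sum>j\<in>aa_window m k. E k + E j)"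
  proof (rule eventually_sequentiallyI)
    fix k assume "m \<le> k"
    hence "aa_window m k = {0 + (k - m)..<m + (k - m)}" by (simp add: aa_window_def)
    thus "(\<Sum>i<m. E k + E (k - m + i)) = (\<Sum>j\<in>aa_window m k. E k + E j)"
      by (simp only: sum.shift_bounds_nat_ivl atLeast0LessThan add.commute)
  qed
  ultimately show ?thesis by (rule Lim_transform_eventually)
qed

(* The o(k) term: rho and rho' are the relative linearization errors at x_k and x_(k+1), M is the
   sum of absolute errors over the window. *)
definition aa_rate_perturbation :: "real \<Rightarrow> real \<Rightarrow> real \<Rightarrow> real \<Rightarrow> real \<Rightarrow> real" where
  "aa_rate_perturbation \<mu> lam \<rho> \<rho>' M = (let R = 2 * \<rho> / \<mu> + M / sqrt lam in R + 2 * (2 * \<rho>' / \<mu>) * (1 + R))"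

lemma aa_rate_perturbation_tendsto_zero:
  assumes "\<rho> \<longlonglongrightarrow> 0" and "M \<longlonglongrightarrow> 0"
  shows "(\<lambda>k. aa_rate_perturbation \<mu> lam (\<rho> k) (\<rho> (Suc k)) (M k)) \<longlonglongrightarrow> 0"
proof -
  have R: "(\<lambda>k. 2 * \<rho> k / \<mu> + M k / sqrt lam) \<longlonglongrightarrow> 0"
    using assms by (intro tendsto_add_zero tendsto_divide_zero tendsto_mult_right_zero)
  have t: "(\<lambda>k. 2 * (2 * \<rho> (Suc k) / \<mu>)) \<longlonglongrightarrow> 0"
    using LIMSEQ_Suc[OF assms(1)] by (intro tendsto_mult_right_zero tendsto_divide_zero)
  show ?thesis
    using tendsto_add[OF R tendsto_mult[OF t tendsto_add[OF tendsto_const R]]]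
    by (simp add: aa_rate_perturbation_def Let_def)
qed

lemma aa_gd_ratio_step:
  fixes A :: "real^'n^'n"
  assumes aa: "aa_gd df \<eta> m lam x0 x \<alpha>" and "1 \<le> k" and "0 < lam" and "0 < \<mu>"
    and e: "e = (\<lambda>y. df y - A *v (y - xs))"
    and contr: "\<And>v. norm (v - \<eta> *\<^sub>R (A *v v)) \<le> c * norm v" and "0 \<le> c" and "c \<le> 1"
    and coercive: "\<And>w. \<mu> * norm w \<le> norm (A *v w)"
    and err: "\<And>i. norm (e (x i)) \<le> \<rho> i * norm (x i - xs)" and "\<And>i. 0 \<le> \<rho> i"
    and small: "\<rho> k \<le> \<mu> / 4" "\<rho> (Suc k) \<le> \<mu> / 4"
    and "df (x k) \<noteq> 0"
  shows "norm (aa_Pi_grad df m x \<alpha> k) / norm (df (x k)) \<le> 1 \<and>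
         norm (df (x (Suc k))) / norm (df (x k))
           \<le> norm (aa_Pi_grad df m x \<alpha> k) / norm (df (x k)) * c
              + aa_rate_perturbation \<mu> lam (\<rho> k) (\<rho> (Suc k)) (\<Sum>j\<in>aa_window m k. norm (e (x k)) + norm (e (x j)))"
proof -
  define n n' p where "n = norm (df (x k))" and "n' = norm (df (x (Suc k)))" and "p = norm (aa_Pi_grad df m x \<alpha> k)"
  define M where "M = (\<Sum>j\<in>aa_window m k. norm (e (x k)) + norm (e (x j)))"
  define R t where "R = 2 * \<rho> k / \<mu> + M / sqrt lam" and "t = 2 * \<rho> (Suc k) / \<mu>"
  note est = aa_gd_gradient_estimate[OF aa \<open>1 \<le> k\<close> \<open>0 < lam\<close> e contr]
  have err_grad: "norm (e (x i)) \<le> 2 * \<rho> i / \<mu> * norm (df (x i))" if "\<rho> i \<le> \<mu> / 4" for i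
    using linearization_error_le_value[OF coercive \<open>0 < \<mu>\<close>, of df "x i" xs "\<rho> i"] err[of i] \<open>0 \<le> \<rho> i\<close> that
    by (simp add: e)
  have "n' \<le> c * p + t * n' + R * n"
    using est(2) err_grad[OF small(1)] err_grad[OF small(2)]
    unfolding n_def n'_def p_def R_def t_def M_def by (simp add: algebra_simps)
  moreover have "0 \<le> M" unfolding M_def by (simp add: sum_nonneg add_nonneg_nonneg)
  hence "0 \<le> R" using \<open>0 \<le> \<rho> k\<close> \<open>0 < \<mu>\<close> \<open>0 < lam\<close> by (simp add: R_def)
  moreover have "0 < n" using \<open>df (x k) \<noteq> 0\<close> by (simp add: n_def)
  ultimately have "n' / n \<le> p / n * c + (R + 2 * t * (1 + R))"
    using est(1) small(2) \<open>0 \<le> c\<close> \<open>c \<le> 1\<close> \<open>0 \<le> \<rho> (Suc k)\<close> \<open>0 < \<mu>\<close>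
    by (intro ratio_bound_absorb) (simp_all add: n_def n'_def p_def t_def)
  moreover have "p / n \<le> 1" using est(1) \<open>0 < n\<close> by (simp add: n_def p_def)
  ultimately show ?thesis
    by (simp add: n_def n'_def p_def aa_rate_perturbation_def Let_def R_def t_def M_def)
qed

lemma aa_gd_asymptotic_rate:
  fixes A :: "real^'n^'n" and df :: "real^'n \<Rightarrow> real^'n"
  assumes deriv: "(df has_derivative (*v) A) (at xs)" and "df xs = 0"
    and sym: "\<And>u v. u \<bullet> (A *v v) = v \<bullet> (A *v u)"
    and lower: "\<And>v. \<mu> * (v \<bullet> v) \<le> v \<bullet> (A *v v)" and upper: "\<And>v. v \<bullet> (A *v v) \<le> L * (v \<bullet> v)"
    and "0 < \<mu>" and "\<mu> \<le> L" and "0 < \<eta>" and "\<eta> \<le> 2 / (L + \<mu>)" and "0 < lam"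
    and aa: "aa_gd df \<eta> m lam x0 x \<alpha>" and nonzero: "\<And>k. df (x k) \<noteq> 0" and conv: "x \<longlonglongrightarrow> xs"
  shows "\<exists>r :: nat \<Rightarrow> real. r \<longlonglongrightarrow> 0 \<and>
           (\<forall>\<^sub>F k in sequentially.
              norm (aa_Pi_grad df m x \<alpha> k) / norm (df (x k)) \<le> 1 \<and>
              norm (df (x (Suc k))) / norm (df (x k))
                \<le> (norm (aa_Pi_grad df m x \<alpha> k) / norm (df (x k))) * (1 - \<eta> * \<mu>) + r k)"
proof -
  note contr = gradient_step_contraction[OF matrix_vector_mul_linear sym lower upper \<open>0 < \<mu>\<close> \<open>\<mu> \<le> L\<close> \<open>0 < \<eta>\<close>
      \<open>\<eta> \<le> 2 / (L + \<mu>)\<close>]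
  have "\<eta> * \<mu> \<le> 1" using step_size_bounds \<open>0 < \<mu>\<close> \<open>\<mu> \<le> L\<close> \<open>0 < \<eta>\<close> \<open>\<eta> \<le> 2 / (L + \<mu>)\<close> by blast
  have x_ne: "x k \<noteq> xs" for k using nonzero \<open>df xs = 0\<close> by metis
  define e where "e = (\<lambda>y. df y - A *v (y - xs))"
  define \<rho> where "\<rho> k = norm (e (x k)) / norm (x k - xs)" for k
  have err: "norm (e (x k)) = \<rho> k * norm (x k - xs)" for k using x_ne[of k] by (simp add: \<rho>_def)
  have \<rho>_lim: "\<rho> \<longlonglongrightarrow> 0"
    using linearization_ratio_tendsto_zero[OF deriv conv x_ne] by (simp add: \<rho>_def[abs_def] e_def \<open>df xs = 0\<close>)
  have "(\<lambda>k. norm (x k - xs)) \<longlonglongrightarrow> 0" using conv by (simp add: LIM_zero_iff tendsto_norm_zero)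
  with \<rho>_lim have "(\<lambda>k. norm (e (x k))) \<longlonglongrightarrow> 0" unfolding err by (rule tendsto_mult_zero)
  define M where "M k = (\<Sum>j\<in>aa_window m k. norm (e (x k)) + norm (e (x j)))" for k
  have "M \<longlonglongrightarrow> 0" unfolding M_def by (rule aa_window_sum_tendsto_zero) fact
  have small: "\<forall>\<^sub>F k in sequentially. \<rho> k < \<mu> / 4"
    using order_tendstoD(2)[OF \<rho>_lim, of "\<mu> / 4"] \<open>0 < \<mu>\<close> by simp
  have "\<forall>\<^sub>F k in sequentially. 1 \<le> k \<and> \<rho> k \<le> \<mu> / 4 \<and> \<rho> (Suc k) \<le> \<mu> / 4"
    using small small[THEN eventually_sequentially_Suc[THEN iffD2]] eventually_ge_at_top[of 1]
    by eventually_elim auto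
  hence "\<forall>\<^sub>F k in sequentially.
      norm (aa_Pi_grad df m x \<alpha> k) / norm (df (x k)) \<le> 1 \<and>
      norm (df (x (Suc k))) / norm (df (x k))
        \<le> (norm (aa_Pi_grad df m x \<alpha> k) / norm (df (x k))) * (1 - \<eta> * \<mu>)
           + aa_rate_perturbation \<mu> lam (\<rho> k) (\<rho> (Suc k)) (M k)"
  proof eventually_elim
    case (elim k)
    have "0 \<le> \<rho> i" for i by (simp add: \<rho>_def)
    with elim \<open>\<eta> * \<mu> \<le> 1\<close> \<open>0 < \<eta>\<close> \<open>0 < \<mu>\<close> show ?case unfolding M_def
      by (intro aa_gd_ratio_step[OF aa _ \<open>0 < lam\<close> \<open>0 < \<mu>\<close> e_def contr _ _
          norm_image_ge_of_coercive[OF lower] err[THEN eq_refl] _ _ _ nonzero]) simp_all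
  qed
  with aa_rate_perturbation_tendsto_zero[OF \<rho>_lim \<open>M \<longlonglongrightarrow> 0\<close>] show ?thesis by blast
qed

theorem theorem3p2:
  fixes f :: "real^'n \<Rightarrow> real"
    and df :: "real^'n \<Rightarrow> real^'n"
    and H :: "real^'n \<Rightarrow> real^'n^'n"
    and \<mu> L \<eta> lam :: real and m :: nat
    and x0 xs :: "real^'n" and x :: "nat \<Rightarrow> real^'n" and \<alpha> :: "nat \<Rightarrow> nat \<Rightarrow> real"
  assumes grad: "\<And>y. (f has_derivative (\<lambda>h. df y \<bullet> h)) (at y)"
    and hess: "\<And>y. (df has_derivative (\<lambda>h. H y *v h)) (at y)"
    and hess_cont: "continuous_on UNIV H"
    and eig: "\<And>y c. is_eigenvalue (H y) c \<Longrightarrow> \<mu> \<le> c \<and> c \<le> L"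
    and mu_pos: "0 < \<mu>" and mu_L: "\<mu> \<le> L"
    and minimizer: "\<And>y. f xs \<le> f y"
    and eta_pos: "0 < \<eta>" and eta_le: "\<eta> \<le> 2 / (L + \<mu>)"
    and m_ge: "m \<ge> 1" and lam_pos: "lam > 0"
    and aa: "aa_gd df \<eta> m lam x0 x \<alpha>"
    and nonzero: "\<And>k. df (x k) \<noteq> 0"
    and conv: "x \<longlonglongrightarrow> xs"
  shows "\<exists>r :: nat \<Rightarrow> real. r \<longlonglongrightarrow> 0 \<and>
           (\<forall>\<^sub>F k in sequentially.
              norm (aa_Pi_grad df m x \<alpha> k) / norm (df (x k)) \<le> 1 \<and>
              norm (df (x (Suc k))) / norm (df (x k))
                \<le> (norm (aa_Pi_grad df m x \<alpha> k) / norm (df (x k))) * (1 - \<eta> * \<mu>) + r k)"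
proof -
  have sym: "\<And>u v. u \<bullet> (H xs *v v) = v \<bullet> (H xs *v u)"
    using hessian_matrix_symmetric[OF grad hess hess_cont] .
  note bounds = eigenvalue_bounds_quadratic_form[OF sym eig]
  have "df xs = 0" using gradient_zero_at_minimizer[OF grad minimizer] .
  from aa_gd_asymptotic_rate[OF hess \<open>df xs = 0\<close> sym bounds mu_pos mu_L eta_pos eta_le lam_pos aa nonzero conv]
  show ?thesis .
qed

end
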